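(* Let $\tilde{A}\in\mathbb{Q}^{q\times n}$, $\tilde{b}\in\mathbb{Q}^q$ be the constraint data of the LP relaxation $P=\{x:\tilde{A}x\ge\tilde{b}\}=\{x: Ax\ge b,\ x\ge 0,\ x_j\le 1,\ j=1,\dots,p\}$ ($q=m+n+p$, $Q=\{1,\dots,q\}$), and let $T$ be a finite index set with $D^t\in\mathbb{Q}^{r\times n}$, $d_0^t\in\mathbb{Q}^r$ for $t\in T$. Let $\bar{w}=(\bar{\alpha},\bar{\beta},\{\bar{u}^t,\bar{v}^t\}_{t\in T})$ be a feasible solution of the CGLP system that is not basic, and suppose the submatrix $\tilde{A}_N$ of $\tilde{A}$ with rows indexed by $N=N(\bar{u}):=\{j\in Q:\bar{u}^t_j>0\text{ for some }t\in T\}$ has full row rank. Then the inequality $\bar{\alpha}x\ge\bar{\beta}$ is valid for the closure of regular cuts.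
   Context: The CGLP system consists of variables $\alpha\in\mathbb{R}^n$, $\beta\in\mathbb{R}$, $u^t\in\mathbb{R}^q$, $v^t\in\mathbb{R}^r$ ($t\in T$) and constraints: $\alpha-u^t\tilde{A}-v^tD^t=0$ and $\beta-u^t\tilde{b}-v^td_0^t=0$ for all $t\in T$; $\sum_{t\in T}\sum_{i=1}^q u^t_i+\sum_{t\in T}\sum_{i=1}^r v^t_i=1$; $u^t,v^t\ge 0$ for all $t\in T$. A basic feasible solution of this system is regular if there exists $J\subseteq Q$, $|J|=n$, with the $n\times n$ submatrix $\tilde{A}_J$ nonsingular and $u^t_j=0$ for all $j\notin J$, $t\in T$. A cut $\alpha x\ge\beta$ is regular if there is a regular basic feasible solution of the CGLP system whose $(\alpha,\beta)$-component equals $(\alpha,\beta)$ up to a positive scalar multiple. The closure of regular cuts is the set of points $x\in P$ satisfying every regular cut. *)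

theory Defs
  imports Main "HOL.Real"
begin

text \<open>Vectors are functions nat \<Rightarrow> real with explicit dimensions (indices start at 0);
  matrices are functions nat \<Rightarrow> nat \<Rightarrow> real (row, column).\<close>

text \<open>The constraint matrix of P = {x. A x \<ge> b, x \<ge> 0, x_j \<le> 1 (j < p)} written as
  At x \<ge> bt with q = m + n + p rows: rows of A, then the unit rows e_j, then the rows -e_j (j<p).\<close>

definition Atil :: "nat \<Rightarrow> nat \<Rightarrow> nat \<Rightarrow> (nat \<Rightarrow> nat \<Rightarrow> real) \<Rightarrow> nat \<Rightarrow> nat \<Rightarrow> real" where
  "Atil m n p A i j =
     (if i < m then A i j
      else if i < m + n then (if j = i - m then 1 else 0)
      else if i < m + n + p then (if j = i - m - n then -1 else 0)
      else 0)"

definition btil :: "nat \<Rightarrow> nat \<Rightarrow> nat \<Rightarrow> (nat \<Rightarrow> real) \<Rightarrow> nat \<Rightarrow> real" where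
  "btil m n p b i =
     (if i < m then b i
      else if i < m + n then 0
      else if i < m + n + p then -1
      else 0)"

text \<open>Feasibility for the CGLP system. The point (alpha, beta, u, v) is represented canonically:
  components outside the index ranges are zero.\<close>

definition cglp_feasible ::
  "nat \<Rightarrow> nat \<Rightarrow> (nat \<Rightarrow> nat \<Rightarrow> real) \<Rightarrow> (nat \<Rightarrow> real) \<Rightarrow> nat \<Rightarrow> 'a set
   \<Rightarrow> ('a \<Rightarrow> nat \<Rightarrow> nat \<Rightarrow> real) \<Rightarrow> ('a \<Rightarrow> nat \<Rightarrow> real)
   \<Rightarrow> (nat \<Rightarrow> real) \<Rightarrow> real \<Rightarrow> ('a \<Rightarrow> nat \<Rightarrow> real) \<Rightarrow> ('a \<Rightarrow> nat \<Rightarrow> real) \<Rightarrow> bool" where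
  "cglp_feasible n q At bt r T D d0 \<alpha> \<beta> u v \<longleftrightarrow>
     (\<forall>j. n \<le> j \<longrightarrow> \<alpha> j = 0) \<and>
     (\<forall>t i. t \<notin> T \<or> q \<le> i \<longrightarrow> u t i = 0) \<and>
     (\<forall>t i. t \<notin> T \<or> r \<le> i \<longrightarrow> v t i = 0) \<and>
     (\<forall>t\<in>T. \<forall>j<n. \<alpha> j - (\<Sum>i<q. u t i * At i j) - (\<Sum>i<r. v t i * D t i j) = 0) \<and>
     (\<forall>t\<in>T. \<beta> - (\<Sum>i<q. u t i * bt i) - (\<Sum>i<r. v t i * d0 t i) = 0) \<and>
     (\<Sum>t\<in>T. \<Sum>i<q. u t i) + (\<Sum>t\<in>T. \<Sum>i<r. v t i) = 1 \<and>
     (\<forall>t\<in>T. \<forall>i<q. 0 \<le> u t i) \<and>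
     (\<forall>t\<in>T. \<forall>i<r. 0 \<le> v t i)"

text \<open>Basic feasible solution: feasible, and the constraints active at the point
  (all equations and the tight nonnegativity constraints) have rank equal to the number
  of variables, i.e. the homogeneous system of active constraints has only the trivial solution.\<close>

definition cglp_basic ::
  "nat \<Rightarrow> nat \<Rightarrow> (nat \<Rightarrow> nat \<Rightarrow> real) \<Rightarrow> (nat \<Rightarrow> real) \<Rightarrow> nat \<Rightarrow> 'a set
   \<Rightarrow> ('a \<Rightarrow> nat \<Rightarrow> nat \<Rightarrow> real) \<Rightarrow> ('a \<Rightarrow> nat \<Rightarrow> real)
   \<Rightarrow> (nat \<Rightarrow> real) \<Rightarrow> real \<Rightarrow> ('a \<Rightarrow> nat \<Rightarrow> real) \<Rightarrow> ('a \<Rightarrow> nat \<Rightarrow> real) \<Rightarrow> bool" where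
  "cglp_basic n q At bt r T D d0 \<alpha> \<beta> u v \<longleftrightarrow>
     cglp_feasible n q At bt r T D d0 \<alpha> \<beta> u v \<and>
     (\<forall>da db du dv.
        (\<forall>j. n \<le> j \<longrightarrow> da j = 0) \<and>
        (\<forall>t i. t \<notin> T \<or> q \<le> i \<longrightarrow> du t i = 0) \<and>
        (\<forall>t i. t \<notin> T \<or> r \<le> i \<longrightarrow> dv t i = 0) \<and>
        (\<forall>t\<in>T. \<forall>j<n. da j - (\<Sum>i<q. du t i * At i j) - (\<Sum>i<r. dv t i * D t i j) = 0) \<and>
        (\<forall>t\<in>T. db - (\<Sum>i<q. du t i * bt i) - (\<Sum>i<r. dv t i * d0 t i) = 0) \<and>
        (\<Sum>t\<in>T. \<Sum>i<q. du t i) + (\<Sum>t\<in>T. \<Sum>i<r. dv t i) = 0 \<and>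
        (\<forall>t\<in>T. \<forall>i<q. u t i = 0 \<longrightarrow> du t i = 0) \<and>
        (\<forall>t\<in>T. \<forall>i<r. v t i = 0 \<longrightarrow> dv t i = 0)
      \<longrightarrow> (\<forall>j. da j = 0) \<and> db = 0 \<and> (\<forall>t i. du t i = 0) \<and> (\<forall>t i. dv t i = 0))"

definition rows_nonsingular :: "nat \<Rightarrow> (nat \<Rightarrow> nat \<Rightarrow> real) \<Rightarrow> nat set \<Rightarrow> bool" where
  "rows_nonsingular n At J \<longleftrightarrow>
     card J = n \<and> (\<forall>x. (\<forall>i\<in>J. (\<Sum>j<n. At i j * x j) = 0) \<longrightarrow> (\<forall>j<n. x j = 0))"

definition full_row_rank :: "nat \<Rightarrow> (nat \<Rightarrow> nat \<Rightarrow> real) \<Rightarrow> nat set \<Rightarrow> bool" where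
  "full_row_rank n At N \<longleftrightarrow>
     (\<forall>c. (\<forall>j<n. (\<Sum>i\<in>N. c i * At i j) = 0) \<longrightarrow> (\<forall>i\<in>N. c i = 0))"

definition cglp_regular_bfs ::
  "nat \<Rightarrow> nat \<Rightarrow> (nat \<Rightarrow> nat \<Rightarrow> real) \<Rightarrow> (nat \<Rightarrow> real) \<Rightarrow> nat \<Rightarrow> 'a set
   \<Rightarrow> ('a \<Rightarrow> nat \<Rightarrow> nat \<Rightarrow> real) \<Rightarrow> ('a \<Rightarrow> nat \<Rightarrow> real)
   \<Rightarrow> (nat \<Rightarrow> real) \<Rightarrow> real \<Rightarrow> ('a \<Rightarrow> nat \<Rightarrow> real) \<Rightarrow> ('a \<Rightarrow> nat \<Rightarrow> real) \<Rightarrow> bool" where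
  "cglp_regular_bfs n q At bt r T D d0 \<alpha> \<beta> u v \<longleftrightarrow>
     cglp_basic n q At bt r T D d0 \<alpha> \<beta> u v \<and>
     (\<exists>J. J \<subseteq> {..<q} \<and> card J = n \<and> rows_nonsingular n At J \<and>
          (\<forall>t\<in>T. \<forall>j<q. j \<notin> J \<longrightarrow> u t j = 0))"

definition regular_cut ::
  "nat \<Rightarrow> nat \<Rightarrow> (nat \<Rightarrow> nat \<Rightarrow> real) \<Rightarrow> (nat \<Rightarrow> real) \<Rightarrow> nat \<Rightarrow> 'a set
   \<Rightarrow> ('a \<Rightarrow> nat \<Rightarrow> nat \<Rightarrow> real) \<Rightarrow> ('a \<Rightarrow> nat \<Rightarrow> real)
   \<Rightarrow> (nat \<Rightarrow> real) \<Rightarrow> real \<Rightarrow> bool" where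
  "regular_cut n q At bt r T D d0 \<alpha> \<beta> \<longleftrightarrow>
     (\<exists>c::real. \<exists>\<alpha>' \<beta>' u v. c > 0 \<and> cglp_regular_bfs n q At bt r T D d0 \<alpha>' \<beta>' u v \<and>
        (\<forall>j<n. \<alpha> j = c * \<alpha>' j) \<and> \<beta> = c * \<beta>')"

definition regular_closure ::
  "nat \<Rightarrow> nat \<Rightarrow> (nat \<Rightarrow> nat \<Rightarrow> real) \<Rightarrow> (nat \<Rightarrow> real) \<Rightarrow> nat \<Rightarrow> 'a set
   \<Rightarrow> ('a \<Rightarrow> nat \<Rightarrow> nat \<Rightarrow> real) \<Rightarrow> ('a \<Rightarrow> nat \<Rightarrow> real) \<Rightarrow> (nat \<Rightarrow> real) set" where
  "regular_closure n q At bt r T D d0 =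
     {x. (\<forall>i<q. bt i \<le> (\<Sum>j<n. At i j * x j)) \<and>
         (\<forall>\<alpha> \<beta>. regular_cut n q At bt r T D d0 \<alpha> \<beta> \<longrightarrow> \<beta> \<le> (\<Sum>j<n. \<alpha> j * x j))}"

end

theory Submission
  imports Defs HOL.Vector_Spaces "HOL-Library.Function_Algebras"
begin

text \<open>
  Fix x in the closure and let N be the multiplier support of the given point; induct on
  the support of the multipliers (u, v) over all feasible points w whose multiplier support lies
  in N.

  If w is not basic, a nonzero solution d of the homogeneous CGLP equations is supported within
  the support of w. Its multipliers sum to zero, so d and -d both have a negative entry, and the
  ratio test moves w along d and along -d to feasible points w + l d and w - \<mu> d (l, \<mu> > 0) of
  strictly smaller support. Both give cuts valid at x, and since the cut depends affinely on w
  and w lies between them, so does w.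

  If w is basic, its multiplier support, a subset of N, still indexes rows of full rank. The
  constraints x \<ge> 0 put all unit vectors among the rows of the constraint matrix, so these rows
  extend to n rows forming a nonsingular matrix: w is a regular basic solution, and its cut is
  regular, hence valid at x.
\<close>

definition scale_fun :: "real \<Rightarrow> (nat \<Rightarrow> real) \<Rightarrow> nat \<Rightarrow> real" where
  "scale_fun c f = (\<lambda>j. c * f j)"

interpretation fun_space: vector_space scale_fun
  by unfold_locales (auto simp: scale_fun_def fun_eq_iff algebra_simps)

lemma sum_fun_apply: "sum f A j = (\<Sum>x\<in>A. f x j)"
  for f :: "'b \<Rightarrow> nat \<Rightarrow> real"
  by (induction A rule: infinite_finite_induct) auto

definition row_vec :: "nat \<Rightarrow> (nat \<Rightarrow> nat \<Rightarrow> real) \<Rightarrow> nat \<Rightarrow> nat \<Rightarrow> real" where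
  "row_vec n At i = (\<lambda>k. if k < n then At i k else 0)"

definition unit_vec :: "nat \<Rightarrow> nat \<Rightarrow> real" where
  "unit_vec j = (\<lambda>k. if k = j then 1 else 0)"

lemma sum_scale_row_vec_apply:
  "(\<Sum>i\<in>J. scale_fun (c i) (row_vec n At i)) k = (if k < n then (\<Sum>i\<in>J. c i * At i k) else 0)"
  by (simp add: sum_fun_apply scale_fun_def row_vec_def)

lemma full_row_rankD:
  "full_row_rank n At J \<Longrightarrow> (\<And>j. j < n \<Longrightarrow> (\<Sum>i\<in>J. c i * At i j) = 0) \<Longrightarrow> i \<in> J \<Longrightarrow> c i = 0"
  unfolding full_row_rank_def by (erule allE[of _ c]) blast

lemma full_row_rank_subset:
  assumes "finite N" "M \<subseteq> N" "full_row_rank n At N"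
  shows "full_row_rank n At M"
  unfolding full_row_rank_def
proof (intro allI impI ballI)
  fix c i assume c: "\<forall>j<n. (\<Sum>i\<in>M. c i * At i j) = 0" and "i \<in> M"
  let ?c = "\<lambda>i. if i \<in> M then c i else 0"
  have "(\<Sum>i\<in>N. ?c i * At i j) = (\<Sum>i\<in>M. c i * At i j)" for j
    using assms(1,2) by (intro sum.mono_neutral_cong_right) auto
  then have "?c i = 0"
    using c \<open>i \<in> M\<close> assms(2) by (intro full_row_rankD[OF assms(3), of ?c]) auto
  with \<open>i \<in> M\<close> show "c i = 0" by simp
qed

lemma full_row_rank_inj_on:
  assumes "finite J" "full_row_rank n At J"
  shows "inj_on (row_vec n At) J"
proof (rule inj_onI, rule ccontr)
  fix i i' assume i: "i \<in> J" "i' \<in> J" "row_vec n At i = row_vec n At i'" "i \<noteq> i'"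
  let ?c = "\<lambda>k. if k = i then 1 else if k = i' then -1 else (0::real)"
  have "(\<Sum>k\<in>J. ?c k * At k j) = 0" if "j < n" for j
  proof -
    have "(\<Sum>k\<in>J. ?c k * At k j) = (\<Sum>k\<in>J. (if k = i then At i j else 0) - (if k = i' then At i' j else 0))"
      using i(4) by (intro sum.cong) auto
    also have "\<dots> = At i j - At i' j"
      using assms(1) i(1,2) by (simp add: sum_subtractf)
    also have "\<dots> = 0"
      using fun_cong[OF i(3), of j] that by (simp add: row_vec_def)
    finally show ?thesis .
  qed
  from full_row_rankD[OF assms(2), of ?c, OF this i(1)] show False by simp
qed

lemma full_row_rank_independent:
  assumes "finite J" "full_row_rank n At J"
  shows "fun_space.independent (row_vec n At ` J)"
proof (rule fun_space.independent_if_scalars_zero)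
  show "finite (row_vec n At ` J)" using assms(1) by simp
next
  fix f v
  assume sum_zero: "(\<Sum>w\<in>row_vec n At ` J. scale_fun (f w) w) = 0"
    and "v \<in> row_vec n At ` J"
  then obtain i where i: "i \<in> J" "v = row_vec n At i" by blast
  have rows_zero: "(\<Sum>k\<in>J. scale_fun (f (row_vec n At k)) (row_vec n At k)) = 0"
    using sum_zero by (simp add: sum.reindex[OF full_row_rank_inj_on[OF assms]])
  have "(\<Sum>k\<in>J. f (row_vec n At k) * At k j) = 0" if "j < n" for j
    using fun_cong[OF rows_zero, of j] that by (simp add: sum_scale_row_vec_apply)
  with full_row_rankD[OF assms(2), of "\<lambda>k. f (row_vec n At k)", OF _ i(1)] i(2)
  show "f v = 0" by blast
qed

lemma unit_vec_inj: "inj unit_vec"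
proof (rule injI)
  fix i j assume "unit_vec i = unit_vec j"
  then have "unit_vec i i = unit_vec j i" by simp
  then show "i = j" by (simp add: unit_vec_def split: if_splits)
qed

lemma sum_scale_unit_vec_apply:
  assumes "finite K"
  shows "(\<Sum>k\<in>K. scale_fun (c k) (unit_vec k)) j = (if j \<in> K then c j else 0)"
proof -
  have "(\<Sum>k\<in>K. scale_fun (c k) (unit_vec k)) j = (\<Sum>k\<in>K. if j = k then c k else 0)"
    by (auto simp: sum_fun_apply scale_fun_def unit_vec_def intro: sum.cong)
  then show ?thesis using assms by simp
qed

lemma unit_vec_independent: "fun_space.independent (unit_vec ` {..<n})"
proof (rule fun_space.independent_if_scalars_zero)
  show "finite (unit_vec ` {..<n})" by simp
next
  fix f v
  assume sum_zero: "(\<Sum>w\<in>unit_vec ` {..<n}. scale_fun (f w) w) = 0"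
    and "v \<in> unit_vec ` {..<n}"
  then obtain j where j: "j < n" "v = unit_vec j" by blast
  have "(\<Sum>k<n. scale_fun (f (unit_vec k)) (unit_vec k)) = 0"
    using sum_zero by (simp add: sum.reindex[OF inj_on_subset[OF unit_vec_inj]])
  from fun_cong[OF this, of j] j show "f v = 0"
    by (simp add: sum_scale_unit_vec_apply)
qed

lemma in_span_unit_vec:
  assumes "\<forall>k\<ge>n. y k = 0"
  shows "y \<in> fun_space.span (unit_vec ` {..<n})"
proof -
  have "y = (\<Sum>k<n. scale_fun (y k) (unit_vec k))"
    using assms by (auto simp: sum_scale_unit_vec_apply not_less)
  also have "\<dots> \<in> fun_space.span (unit_vec ` {..<n})"
    by (intro fun_space.span_sum fun_space.span_scale fun_space.span_base) auto
  finally show ?thesis .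
qed

lemma card_le_if_full_row_rank:
  assumes "finite J" "full_row_rank n At J"
  shows "card J \<le> n"
proof -
  have "row_vec n At ` J \<subseteq> fun_space.span (unit_vec ` {..<n})"
    by (auto intro: in_span_unit_vec simp: row_vec_def)
  then have "card (row_vec n At ` J) \<le> card (unit_vec ` {..<n})"
    using fun_space.independent_span_bound full_row_rank_independent[OF assms] by blast
  also have "\<dots> \<le> n"
    using card_image_le[of "{..<n}" unit_vec] by simp
  finally show ?thesis
    by (simp add: card_image[OF full_row_rank_inj_on[OF assms]])
qed

lemma card_ge_if_span_unit_vec:
  assumes "finite J" "\<forall>j<n. unit_vec j \<in> fun_space.span (row_vec n At ` J)"
  shows "n \<le> card J"
proof -
  have "card (unit_vec ` {..<n}) \<le> card (row_vec n At ` J)"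
    using fun_space.independent_span_bound[OF _ unit_vec_independent] assms by blast
  also have "\<dots> \<le> card J" by (rule card_image_le[OF assms(1)])
  finally show ?thesis
    by (simp add: card_image[OF inj_on_subset[OF unit_vec_inj]])
qed

lemma full_row_rank_insert:
  assumes "finite J" "full_row_rank n At J" "row_vec n At i \<notin> fun_space.span (row_vec n At ` J)"
  shows "full_row_rank n At (insert i J)"
  unfolding full_row_rank_def
proof (intro allI impI ballI)
  fix c k
  assume sum_zero: "\<forall>j<n. (\<Sum>l\<in>insert i J. c l * At l j) = 0" and k: "k \<in> insert i J"
  have "i \<notin> J" using assms(3) fun_space.span_base by blast
  with sum_zero assms(1) have sum_J: "c i * At i j + (\<Sum>l\<in>J. c l * At l j) = 0" if "j < n" for j
    using that by simp
  have "c i = 0"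
  proof (rule ccontr)
    assume "c i \<noteq> 0"
    have "row_vec n At i = (\<Sum>l\<in>J. scale_fun (- c l / c i) (row_vec n At l))"
    proof
      fix j
      have "At i j = (\<Sum>l\<in>J. - c l / c i * At l j)" if "j < n"
        using sum_J[OF that] \<open>c i \<noteq> 0\<close>
        by (simp add: sum_divide_distrib[symmetric] sum_negf field_simps)
      then show "row_vec n At i j = (\<Sum>l\<in>J. scale_fun (- c l / c i) (row_vec n At l)) j"
        unfolding sum_scale_row_vec_apply by (simp add: row_vec_def)
    qed
    also have "\<dots> \<in> fun_space.span (row_vec n At ` J)"
      by (intro fun_space.span_sum fun_space.span_scale fun_space.span_base) auto
    finally show False using assms(3) by blast
  qed
  with sum_J have "(\<Sum>l\<in>J. c l * At l j) = 0" if "j < n" for j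
    using that by simp
  with full_row_rankD[OF assms(2), of c] k \<open>c i = 0\<close> show "c k = 0" by blast
qed

lemma rows_nonsingular_if_span_unit_vec:
  assumes "finite J" "full_row_rank n At J"
    and spans: "\<forall>j<n. unit_vec j \<in> fun_space.span (row_vec n At ` J)"
  shows "rows_nonsingular n At J"
  unfolding rows_nonsingular_def
proof (intro conjI allI impI)
  show "card J = n"
    using card_le_if_full_row_rank[OF assms(1,2)] card_ge_if_span_unit_vec[OF assms(1) spans]
    by (rule antisym)
next
  fix x j assume kernel: "\<forall>i\<in>J. (\<Sum>k<n. At i k * x k) = 0" and "j < n"
  let ?S = "{y. (\<Sum>k<n. y k * x k) = 0}"
  have "fun_space.subspace ?S"
    by (rule fun_space.subspaceI)
      (auto simp: scale_fun_def distrib_right sum.distrib mult.assoc sum_distrib_left[symmetric])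
  moreover have "row_vec n At ` J \<subseteq> ?S"
    using kernel by (auto simp: row_vec_def)
  ultimately have "unit_vec j \<in> ?S"
    using spans \<open>j < n\<close> fun_space.span_minimal by blast
  then show "x j = 0"
    using \<open>j < n\<close> by (simp add: unit_vec_def if_distrib[of "\<lambda>a. a * _"] cong: if_cong)
qed

lemma full_row_rank_extend_nonsingular:
  assumes unit_rows: "\<forall>j<n. \<exists>i<q. row_vec n At i = unit_vec j"
    and "N \<subseteq> {..<q}" "full_row_rank n At N"
  obtains J where "N \<subseteq> J" "J \<subseteq> {..<q}" "rows_nonsingular n At J"
proof -
  let ?F = "{J. N \<subseteq> J \<and> J \<subseteq> {..<q} \<and> full_row_rank n At J}"
  have "finite ?F" by (rule finite_subset[of _ "Pow {..<q}"]) auto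
  moreover have "N \<in> ?F" using assms(2,3) by blast
  ultimately obtain J where J: "J \<in> ?F" and maximal: "\<And>J'. J' \<in> ?F \<Longrightarrow> J \<subseteq> J' \<Longrightarrow> J = J'"
    using finite_has_maximal2 by (metis (no_types, lifting))
  have "finite J" using J finite_subset by blast
  have row_in_span: "row_vec n At i \<in> fun_space.span (row_vec n At ` J)" if "i < q" for i
  proof (rule ccontr)
    assume "row_vec n At i \<notin> fun_space.span (row_vec n At ` J)"
    then have "insert i J \<in> ?F"
      using J that full_row_rank_insert[OF \<open>finite J\<close>] by blast
    then have "i \<in> J" using maximal by blast
    then show False
      using \<open>row_vec n At i \<notin> _\<close> fun_space.span_base by blast
  qed
  have "\<forall>j<n. unit_vec j \<in> fun_space.span (row_vec n At ` J)"
    using unit_rows row_in_span by metis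
  then have "rows_nonsingular n At J"
    using rows_nonsingular_if_span_unit_vec \<open>finite J\<close> J by blast
  with J that show thesis by blast
qed

lemma exists_neg_if_sum_eq_0:
  fixes d :: "'i \<Rightarrow> real"
  assumes "finite I" "sum d I = 0" "\<exists>k\<in>I. d k \<noteq> 0"
  shows "\<exists>k\<in>I. d k < 0"
  using assms sum_nonneg_eq_0_iff[of I d] by force

lemma ratio_test:
  fixes w d :: "'i \<Rightarrow> real"
  assumes "finite I" and nonneg: "\<forall>k\<in>I. 0 \<le> w k"
    and supp: "\<forall>k\<in>I. w k = 0 \<longrightarrow> d k = 0" and "\<exists>k\<in>I. d k < 0"
  obtains l where "0 < l" "\<forall>k\<in>I. 0 \<le> w k + l * d k"
    "{k\<in>I. w k + l * d k \<noteq> 0} \<subset> {k\<in>I. w k \<noteq> 0}"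
proof -
  let ?K = "{k\<in>I. d k < 0}"
  define l where "l = Min ((\<lambda>k. w k / - d k) ` ?K)"
  have "finite ?K" "?K \<noteq> {}" using assms by auto
  then obtain k0 where k0: "k0 \<in> ?K" "l = w k0 / - d k0"
    unfolding l_def by (metis (no_types, lifting) Min_in finite_imageI image_iff image_is_empty)
  have l_le: "l * - d k \<le> w k" if "k \<in> ?K" for k
  proof -
    have "l \<le> w k / - d k" unfolding l_def using \<open>finite ?K\<close> that by simp
    then show ?thesis using that pos_le_divide_eq[of "- d k" l "w k"] by simp
  qed
  have "w k0 \<noteq> 0" "0 \<le> w k0" using k0(1) supp nonneg by force+
  then have l_pos: "0 < l" using k0 by (simp add: divide_pos_neg)
  have "0 \<le> w k + l * d k" if "k \<in> I" for k
    using l_le[of k] nonneg l_pos that by (cases "d k < 0") auto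
  moreover have "w k0 + l * d k0 = 0" using k0 by simp
  then have "{k\<in>I. w k + l * d k \<noteq> 0} \<subset> {k\<in>I. w k \<noteq> 0}"
    using supp k0(1) \<open>w k0 \<noteq> 0\<close> by fastforce
  ultimately show thesis using that l_pos by blast
qed

definition cglp_homogeneous ::
  "nat \<Rightarrow> nat \<Rightarrow> (nat \<Rightarrow> nat \<Rightarrow> real) \<Rightarrow> (nat \<Rightarrow> real) \<Rightarrow> nat \<Rightarrow> 'a set
   \<Rightarrow> ('a \<Rightarrow> nat \<Rightarrow> nat \<Rightarrow> real) \<Rightarrow> ('a \<Rightarrow> nat \<Rightarrow> real)
   \<Rightarrow> (nat \<Rightarrow> real) \<Rightarrow> real \<Rightarrow> ('a \<Rightarrow> nat \<Rightarrow> real) \<Rightarrow> ('a \<Rightarrow> nat \<Rightarrow> real) \<Rightarrow> bool" where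
  "cglp_homogeneous n q At bt r T D d0 da db du dv \<longleftrightarrow>
     (\<forall>j. n \<le> j \<longrightarrow> da j = 0) \<and>
     (\<forall>t i. t \<notin> T \<or> q \<le> i \<longrightarrow> du t i = 0) \<and>
     (\<forall>t i. t \<notin> T \<or> r \<le> i \<longrightarrow> dv t i = 0) \<and>
     (\<forall>t\<in>T. \<forall>j<n. da j - (\<Sum>i<q. du t i * At i j) - (\<Sum>i<r. dv t i * D t i j) = 0) \<and>
     (\<forall>t\<in>T. db - (\<Sum>i<q. du t i * bt i) - (\<Sum>i<r. dv t i * d0 t i) = 0) \<and>
     (\<Sum>t\<in>T. \<Sum>i<q. du t i) + (\<Sum>t\<in>T. \<Sum>i<r. dv t i) = 0"

lemma cglp_basic_iff:
  "cglp_basic n q At bt r T D d0 \<alpha> \<beta> u v \<longleftrightarrow>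
     cglp_feasible n q At bt r T D d0 \<alpha> \<beta> u v \<and>
     (\<forall>da db du dv. cglp_homogeneous n q At bt r T D d0 da db du dv \<and>
        (\<forall>t\<in>T. \<forall>i<q. u t i = 0 \<longrightarrow> du t i = 0) \<and> (\<forall>t\<in>T. \<forall>i<r. v t i = 0 \<longrightarrow> dv t i = 0)
      \<longrightarrow> (\<forall>j. da j = 0) \<and> db = 0 \<and> (\<forall>t i. du t i = 0) \<and> (\<forall>t i. dv t i = 0))"
  unfolding cglp_basic_def cglp_homogeneous_def by (simp only: conj_assoc)

lemma cglp_homogeneous_uminus:
  "cglp_homogeneous n q At bt r T D d0 da db du dv \<Longrightarrow>
   cglp_homogeneous n q At bt r T D d0 (\<lambda>j. - da j) (- db) (\<lambda>t i. - du t i) (\<lambda>t i. - dv t i)"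
  unfolding cglp_homogeneous_def by (simp add: sum_negf) (simp add: algebra_simps)

lemma cglp_homogeneous_eq_0:
  assumes "T \<noteq> {}" and hom: "cglp_homogeneous n q At bt r T D d0 da db du dv"
    and "\<forall>t\<in>T. \<forall>i<q. du t i = 0" "\<forall>t\<in>T. \<forall>i<r. dv t i = 0"
  shows "(\<forall>j. da j = 0) \<and> db = 0 \<and> (\<forall>t i. du t i = 0) \<and> (\<forall>t i. dv t i = 0)"
proof -
  from assms(1) obtain t where "t \<in> T" by blast
  have du: "\<forall>t i. du t i = 0" and dv: "\<forall>t i. dv t i = 0"
    using hom assms(3,4) unfolding cglp_homogeneous_def by (meson not_le)+
  have "\<forall>j<n. da j = 0" "db = 0"
    using hom \<open>t \<in> T\<close> unfolding cglp_homogeneous_def by (auto simp: du dv)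
  moreover have "\<forall>j\<ge>n. da j = 0"
    using hom unfolding cglp_homogeneous_def by blast
  ultimately show ?thesis using du dv by (meson not_le)
qed

lemma cglp_feasible_move:
  assumes "cglp_feasible n q At bt r T D d0 \<alpha> \<beta> u v"
    and "cglp_homogeneous n q At bt r T D d0 da db du dv"
    and "\<forall>t\<in>T. \<forall>i<q. 0 \<le> u t i + s * du t i" "\<forall>t\<in>T. \<forall>i<r. 0 \<le> v t i + s * dv t i"
  shows "cglp_feasible n q At bt r T D d0 (\<lambda>j. \<alpha> j + s * da j) (\<beta> + s * db)
           (\<lambda>t i. u t i + s * du t i) (\<lambda>t i. v t i + s * dv t i)"
proof -
  have "(\<Sum>t\<in>T. \<Sum>i<q. u t i + s * du t i) + (\<Sum>t\<in>T. \<Sum>i<r. v t i + s * dv t i)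
      = ((\<Sum>t\<in>T. \<Sum>i<q. u t i) + (\<Sum>t\<in>T. \<Sum>i<r. v t i))
        + s * ((\<Sum>t\<in>T. \<Sum>i<q. du t i) + (\<Sum>t\<in>T. \<Sum>i<r. dv t i))"
    by (simp add: sum.distrib sum_distrib_left algebra_simps)
  with assms show ?thesis
    unfolding cglp_feasible_def cglp_homogeneous_def
    by (simp add: algebra_simps sum.distrib sum_distrib_left[symmetric])
qed

text \<open>Both multiplier families of a CGLP point as one, so that the ratio test and the support
  count treat them together.\<close>

definition cglp_weight ::
  "('a \<Rightarrow> nat \<Rightarrow> real) \<Rightarrow> ('a \<Rightarrow> nat \<Rightarrow> real) \<Rightarrow> 'a \<times> nat + 'a \<times> nat \<Rightarrow> real" where
  "cglp_weight u v = case_sum (case_prod u) (case_prod v)"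

definition cglp_support ::
  "'a set \<Rightarrow> nat \<Rightarrow> nat \<Rightarrow> ('a \<Rightarrow> nat \<Rightarrow> real) \<Rightarrow> ('a \<Rightarrow> nat \<Rightarrow> real) \<Rightarrow> ('a \<times> nat + 'a \<times> nat) set" where
  "cglp_support T q r u v = {k \<in> T \<times> {..<q} <+> T \<times> {..<r}. cglp_weight u v k \<noteq> 0}"

definition multiplier_support :: "'a set \<Rightarrow> nat \<Rightarrow> ('a \<Rightarrow> nat \<Rightarrow> real) \<Rightarrow> nat set" where
  "multiplier_support T q u = {j. j < q \<and> (\<exists>t\<in>T. 0 < u t j)}"

lemma cglp_weight_simps [simp]:
  "cglp_weight u v (Inl (t, i)) = u t i" "cglp_weight u v (Inr (t, i)) = v t i"
  by (simp_all add: cglp_weight_def)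

lemma cglp_weight_move:
  "cglp_weight (\<lambda>t i. u t i + s * du t i) (\<lambda>t i. v t i + s * dv t i) k
     = cglp_weight u v k + s * cglp_weight du dv k"
  by (cases k) auto

lemma cglp_weight_uminus:
  "cglp_weight (\<lambda>t i. - du t i) (\<lambda>t i. - dv t i) k = - cglp_weight du dv k"
  by (cases k) auto

lemma sum_cglp_weight:
  assumes "finite T"
  shows "sum (cglp_weight u v) (T \<times> {..<q} <+> T \<times> {..<r})
           = (\<Sum>t\<in>T. \<Sum>i<q. u t i) + (\<Sum>t\<in>T. \<Sum>i<r. v t i)"
  using assms by (simp add: sum.Plus sum.cartesian_product comp_def cglp_weight_def case_prod_beta')

lemma finite_cglp_support: "finite T \<Longrightarrow> finite (cglp_support T q r u v)"
  unfolding cglp_support_def by simp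

lemma multiplier_support_mono:
  assumes "cglp_support T q r u' v' \<subseteq> cglp_support T q r u v" "\<forall>t\<in>T. \<forall>i<q. 0 \<le> u t i"
  shows "multiplier_support T q u' \<subseteq> multiplier_support T q u"
proof
  fix j assume "j \<in> multiplier_support T q u'"
  then obtain t where t: "t \<in> T" "j < q" "0 < u' t j" unfolding multiplier_support_def by blast
  then have "Inl (t, j) \<in> cglp_support T q r u' v'"
    unfolding cglp_support_def by auto
  then have "Inl (t, j) \<in> cglp_support T q r u v"
    using assms(1) by blast
  then have "u t j \<noteq> 0" unfolding cglp_support_def by simp
  with assms(2) t show "j \<in> multiplier_support T q u"
    unfolding multiplier_support_def by force
qed

lemma cglp_move_shrinks_support:
  assumes "finite T" and feasible: "cglp_feasible n q At bt r T D d0 \<alpha> \<beta> u v"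
    and hom: "cglp_homogeneous n q At bt r T D d0 da db du dv"
    and supp: "\<forall>k\<in>T \<times> {..<q} <+> T \<times> {..<r}. cglp_weight u v k = 0 \<longrightarrow> cglp_weight du dv k = 0"
    and nonzero: "\<exists>k\<in>T \<times> {..<q} <+> T \<times> {..<r}. cglp_weight du dv k \<noteq> 0"
  obtains l where "0 < l"
    "cglp_feasible n q At bt r T D d0 (\<lambda>j. \<alpha> j + l * da j) (\<beta> + l * db)
       (\<lambda>t i. u t i + l * du t i) (\<lambda>t i. v t i + l * dv t i)"
    "cglp_support T q r (\<lambda>t i. u t i + l * du t i) (\<lambda>t i. v t i + l * dv t i)
       \<subset> cglp_support T q r u v"
proof -
  let ?I = "T \<times> {..<q} <+> T \<times> {..<r}"
  have "finite ?I" using assms(1) by simp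
  have "sum (cglp_weight du dv) ?I = 0"
    using hom assms(1) unfolding cglp_homogeneous_def by (simp add: sum_cglp_weight)
  then have "\<exists>k\<in>?I. cglp_weight du dv k < 0"
    using exists_neg_if_sum_eq_0 \<open>finite ?I\<close> nonzero by blast
  moreover have "\<forall>k\<in>?I. 0 \<le> cglp_weight u v k"
    using feasible unfolding cglp_feasible_def by auto
  ultimately obtain l where l: "0 < l" "\<forall>k\<in>?I. 0 \<le> cglp_weight u v k + l * cglp_weight du dv k"
    "{k\<in>?I. cglp_weight u v k + l * cglp_weight du dv k \<noteq> 0} \<subset> {k\<in>?I. cglp_weight u v k \<noteq> 0}"
    using ratio_test[OF \<open>finite ?I\<close> _ supp] by blast
  have "cglp_feasible n q At bt r T D d0 (\<lambda>j. \<alpha> j + l * da j) (\<beta> + l * db)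
          (\<lambda>t i. u t i + l * du t i) (\<lambda>t i. v t i + l * dv t i)"
  proof (rule cglp_feasible_move[OF feasible hom])
    show "\<forall>t\<in>T. \<forall>i<q. 0 \<le> u t i + l * du t i"
      using l(2) by (force dest: bspec[of _ _ "Inl (_, _)"])
    show "\<forall>t\<in>T. \<forall>i<r. 0 \<le> v t i + l * dv t i"
      using l(2) by (force dest: bspec[of _ _ "Inr (_, _)"])
  qed
  moreover have "cglp_support T q r (\<lambda>t i. u t i + l * du t i) (\<lambda>t i. v t i + l * dv t i)
      \<subset> cglp_support T q r u v"
    using l(3) unfolding cglp_support_def cglp_weight_move .
  ultimately show thesis using that l(1) by blast
qed

lemma cglp_not_basic_direction:
  assumes feasible: "cglp_feasible n q At bt r T D d0 \<alpha> \<beta> u v"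
    and not_basic: "\<not> cglp_basic n q At bt r T D d0 \<alpha> \<beta> u v"
  obtains da db du dv where "cglp_homogeneous n q At bt r T D d0 da db du dv"
    "\<forall>k\<in>T \<times> {..<q} <+> T \<times> {..<r}. cglp_weight u v k = 0 \<longrightarrow> cglp_weight du dv k = 0"
    "\<exists>k\<in>T \<times> {..<q} <+> T \<times> {..<r}. cglp_weight du dv k \<noteq> 0"
proof -
  obtain da db du dv where hom: "cglp_homogeneous n q At bt r T D d0 da db du dv"
    and supp_u: "\<forall>t\<in>T. \<forall>i<q. u t i = 0 \<longrightarrow> du t i = 0"
    and supp_v: "\<forall>t\<in>T. \<forall>i<r. v t i = 0 \<longrightarrow> dv t i = 0"
    and nontrivial: "\<not> ((\<forall>j. da j = 0) \<and> db = 0 \<and> (\<forall>t i. du t i = 0) \<and> (\<forall>t i. dv t i = 0))"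
    using feasible not_basic unfolding cglp_basic_iff by blast
  have "T \<noteq> {}" using feasible unfolding cglp_feasible_def by auto
  then have "\<not> ((\<forall>t\<in>T. \<forall>i<q. du t i = 0) \<and> (\<forall>t\<in>T. \<forall>i<r. dv t i = 0))"
    using cglp_homogeneous_eq_0[OF _ hom] nontrivial by blast
  then have "\<exists>k\<in>T \<times> {..<q} <+> T \<times> {..<r}. cglp_weight du dv k \<noteq> 0"
    by force
  moreover have "\<forall>k\<in>T \<times> {..<q} <+> T \<times> {..<r}. cglp_weight u v k = 0 \<longrightarrow> cglp_weight du dv k = 0"
    using supp_u supp_v by auto
  ultimately show thesis using that hom by blast
qed

lemma cglp_not_basic_split:
  assumes "finite T" and feasible: "cglp_feasible n q At bt r T D d0 \<alpha> \<beta> u v"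
    and not_basic: "\<not> cglp_basic n q At bt r T D d0 \<alpha> \<beta> u v"
  obtains da db du dv and l \<mu> :: real where "0 < l" "0 < \<mu>"
    "\<forall>s\<in>{l, - \<mu>}. cglp_feasible n q At bt r T D d0 (\<lambda>j. \<alpha> j + s * da j) (\<beta> + s * db)
        (\<lambda>t i. u t i + s * du t i) (\<lambda>t i. v t i + s * dv t i) \<and>
      cglp_support T q r (\<lambda>t i. u t i + s * du t i) (\<lambda>t i. v t i + s * dv t i)
        \<subset> cglp_support T q r u v"
proof -
  obtain da db du dv where hom: "cglp_homogeneous n q At bt r T D d0 da db du dv"
    and supp: "\<forall>k\<in>T \<times> {..<q} <+> T \<times> {..<r}. cglp_weight u v k = 0 \<longrightarrow> cglp_weight du dv k = 0"
    and nonzero: "\<exists>k\<in>T \<times> {..<q} <+> T \<times> {..<r}. cglp_weight du dv k \<noteq> 0"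
    using cglp_not_basic_direction[OF feasible not_basic] by blast
  obtain l where l: "0 < l"
    "cglp_feasible n q At bt r T D d0 (\<lambda>j. \<alpha> j + l * da j) (\<beta> + l * db)
       (\<lambda>t i. u t i + l * du t i) (\<lambda>t i. v t i + l * dv t i)"
    "cglp_support T q r (\<lambda>t i. u t i + l * du t i) (\<lambda>t i. v t i + l * dv t i)
       \<subset> cglp_support T q r u v"
    by (rule cglp_move_shrinks_support[OF assms(1) feasible hom supp nonzero])
  have "\<forall>k\<in>T \<times> {..<q} <+> T \<times> {..<r}. cglp_weight u v k = 0 \<longrightarrow>
      cglp_weight (\<lambda>t i. - du t i) (\<lambda>t i. - dv t i) k = 0"
    and "\<exists>k\<in>T \<times> {..<q} <+> T \<times> {..<r}. cglp_weight (\<lambda>t i. - du t i) (\<lambda>t i. - dv t i) k \<noteq> 0"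
    using supp nonzero by (simp_all add: cglp_weight_uminus)
  then obtain \<mu> where \<mu>: "0 < \<mu>"
    "cglp_feasible n q At bt r T D d0 (\<lambda>j. \<alpha> j + \<mu> * - da j) (\<beta> + \<mu> * - db)
       (\<lambda>t i. u t i + \<mu> * - du t i) (\<lambda>t i. v t i + \<mu> * - dv t i)"
    "cglp_support T q r (\<lambda>t i. u t i + \<mu> * - du t i) (\<lambda>t i. v t i + \<mu> * - dv t i)
       \<subset> cglp_support T q r u v"
    by (rule cglp_move_shrinks_support[OF assms(1) feasible cglp_homogeneous_uminus[OF hom]])
  show thesis
  proof (rule that[OF l(1) \<mu>(1)])
    show "\<forall>s\<in>{l, - \<mu>}. cglp_feasible n q At bt r T D d0 (\<lambda>j. \<alpha> j + s * da j) (\<beta> + s * db)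
        (\<lambda>t i. u t i + s * du t i) (\<lambda>t i. v t i + s * dv t i) \<and>
      cglp_support T q r (\<lambda>t i. u t i + s * du t i) (\<lambda>t i. v t i + s * dv t i)
        \<subset> cglp_support T q r u v"
      using l(2,3) \<mu>(2,3) by simp
  qed
qed

lemma le_if_le_at_opposite_moves:
  fixes a a' b b' l \<mu> :: real
  assumes "0 < l" "0 < \<mu>" "b + l * b' \<le> a + l * a'" "b + - \<mu> * b' \<le> a + - \<mu> * a'"
  shows "b \<le> a"
proof -
  have "0 \<le> \<mu> * a' - \<mu> * b' \<or> l * a' - l * b' < 0"
    using assms(1,2) mult_pos_neg[of l "a' - b'"]
    by (cases "0 \<le> a' - b'") (simp_all add: right_diff_distrib)
  with assms(3,4) show ?thesis by (elim disjE) linarith+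
qed

lemma cglp_cut_valid_if_valid_at_basic:
  assumes "finite T"
    and valid_at_basic: "\<And>\<alpha> \<beta> u v. cglp_basic n q At bt r T D d0 \<alpha> \<beta> u v \<Longrightarrow>
           multiplier_support T q u \<subseteq> S \<Longrightarrow> \<beta> \<le> (\<Sum>j<n. \<alpha> j * x j)"
  shows "cglp_feasible n q At bt r T D d0 \<alpha> \<beta> u v \<Longrightarrow> multiplier_support T q u \<subseteq> S \<Longrightarrow>
           \<beta> \<le> (\<Sum>j<n. \<alpha> j * x j)"
proof (induction "card (cglp_support T q r u v)" arbitrary: \<alpha> \<beta> u v rule: less_induct)
  case less
  note feasible = less.prems(1)
  show ?case
  proof (cases "cglp_basic n q At bt r T D d0 \<alpha> \<beta> u v")
    case True
    then show ?thesis using less.prems(2) by (rule valid_at_basic)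
  next
    case False
    obtain da db du dv and l \<mu> :: real where "0 < l" "0 < \<mu>" and moves:
      "\<forall>s\<in>{l, - \<mu>}. cglp_feasible n q At bt r T D d0 (\<lambda>j. \<alpha> j + s * da j) (\<beta> + s * db)
          (\<lambda>t i. u t i + s * du t i) (\<lambda>t i. v t i + s * dv t i) \<and>
        cglp_support T q r (\<lambda>t i. u t i + s * du t i) (\<lambda>t i. v t i + s * dv t i)
          \<subset> cglp_support T q r u v"
      by (rule cglp_not_basic_split[OF assms(1) feasible False])
    have u_nonneg: "\<forall>t\<in>T. \<forall>i<q. 0 \<le> u t i"
      using feasible unfolding cglp_feasible_def by blast
    have valid_move: "\<beta> + s * db \<le> (\<Sum>j<n. (\<alpha> j + s * da j) * x j)" if "s \<in> {l, - \<mu>}" for s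
    proof -
      note move = moves[rule_format, OF that]
      show ?thesis
      proof (rule less.hyps[OF _ move[THEN conjunct1]])
        show "card (cglp_support T q r (\<lambda>t i. u t i + s * du t i) (\<lambda>t i. v t i + s * dv t i))
            < card (cglp_support T q r u v)"
          by (rule psubset_card_mono[OF finite_cglp_support[OF assms(1)] move[THEN conjunct2]])
        show "multiplier_support T q (\<lambda>t i. u t i + s * du t i) \<subseteq> S"
          using multiplier_support_mono[OF psubset_imp_subset[OF move[THEN conjunct2]] u_nonneg]
            less.prems(2)
          by blast
      qed
    qed
    have sum_move: "(\<Sum>j<n. (\<alpha> j + s * da j) * x j) = (\<Sum>j<n. \<alpha> j * x j) + s * (\<Sum>j<n. da j * x j)"
      for s
      by (simp add: distrib_right sum.distrib sum_distrib_left mult.assoc)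
    have "\<beta> + l * db \<le> (\<Sum>j<n. \<alpha> j * x j) + l * (\<Sum>j<n. da j * x j)"
      using valid_move[of l] unfolding sum_move by simp
    moreover have "\<beta> + - \<mu> * db \<le> (\<Sum>j<n. \<alpha> j * x j) + - \<mu> * (\<Sum>j<n. da j * x j)"
      using valid_move[of "- \<mu>"] unfolding sum_move by simp
    ultimately show ?thesis
      using le_if_le_at_opposite_moves[OF \<open>0 < l\<close> \<open>0 < \<mu>\<close>] by blast
  qed
qed

lemma cglp_regular_bfs_if_full_row_rank:
  assumes unit_rows: "\<forall>j<n. \<exists>i<q. row_vec n At i = unit_vec j"
    and basic: "cglp_basic n q At bt r T D d0 \<alpha> \<beta> u v"
    and rank: "full_row_rank n At (multiplier_support T q u)"
  shows "cglp_regular_bfs n q At bt r T D d0 \<alpha> \<beta> u v"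
proof -
  obtain J where J: "multiplier_support T q u \<subseteq> J" "J \<subseteq> {..<q}" "rows_nonsingular n At J"
    using full_row_rank_extend_nonsingular[OF unit_rows _ rank]
    by (auto simp: multiplier_support_def)
  have "\<forall>t\<in>T. \<forall>i<q. 0 \<le> u t i"
    using basic unfolding cglp_basic_def cglp_feasible_def by blast
  then have "\<forall>t\<in>T. \<forall>j<q. j \<notin> J \<longrightarrow> u t j = 0"
    using J(1) unfolding multiplier_support_def by force
  with basic J show ?thesis
    unfolding cglp_regular_bfs_def rows_nonsingular_def by blast
qed

lemma Atil_unit_rows: "\<forall>j<n. \<exists>i<m + n + p. row_vec n (Atil m n p A) i = unit_vec j"
proof (intro allI impI)
  fix j assume "j < n"
  then have "row_vec n (Atil m n p A) (m + j) = unit_vec j"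
    by (auto simp: row_vec_def unit_vec_def Atil_def)
  with \<open>j < n\<close> show "\<exists>i<m + n + p. row_vec n (Atil m n p A) i = unit_vec j"
    by (intro exI[of _ "m + j"]) simp
qed

theorem corollary1:
  fixes m n p r :: nat
    and A :: "nat \<Rightarrow> nat \<Rightarrow> real" and b :: "nat \<Rightarrow> real"
    and T :: "'a set"
    and D :: "'a \<Rightarrow> nat \<Rightarrow> nat \<Rightarrow> real" and d0 :: "'a \<Rightarrow> nat \<Rightarrow> real"
    and \<alpha> :: "nat \<Rightarrow> real" and \<beta> :: real and u v :: "'a \<Rightarrow> nat \<Rightarrow> real"
  assumes "p \<le> n"
    and "\<forall>i<m. \<forall>j<n. A i j \<in> \<rat>" and "\<forall>i<m. b i \<in> \<rat>"
    and "finite T"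
    and "\<forall>t\<in>T. \<forall>i<r. \<forall>j<n. D t i j \<in> \<rat>" and "\<forall>t\<in>T. \<forall>i<r. d0 t i \<in> \<rat>"
    and "cglp_feasible n (m + n + p) (Atil m n p A) (btil m n p b) r T D d0 \<alpha> \<beta> u v"
    and "\<not> cglp_basic n (m + n + p) (Atil m n p A) (btil m n p b) r T D d0 \<alpha> \<beta> u v"
    and "full_row_rank n (Atil m n p A) {j. j < m + n + p \<and> (\<exists>t\<in>T. u t j > 0)}"
  shows "\<forall>x\<in>regular_closure n (m + n + p) (Atil m n p A) (btil m n p b) r T D d0.
           \<beta> \<le> (\<Sum>j<n. \<alpha> j * x j)"
proof
  let ?q = "m + n + p" and ?At = "Atil m n p A" and ?bt = "btil m n p b"
  fix x assume x: "x \<in> regular_closure n ?q ?At ?bt r T D d0"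
  have rank: "full_row_rank n ?At (multiplier_support T ?q u)"
    using assms(9) unfolding multiplier_support_def .
  have valid_at_basic: "\<beta>' \<le> (\<Sum>j<n. \<alpha>' j * x j)"
    if basic: "cglp_basic n ?q ?At ?bt r T D d0 \<alpha>' \<beta>' u' v'"
      and "multiplier_support T ?q u' \<subseteq> multiplier_support T ?q u" for \<alpha>' \<beta>' u' v'
  proof -
    have "full_row_rank n ?At (multiplier_support T ?q u')"
      using full_row_rank_subset[OF _ that(2) rank] by (simp add: multiplier_support_def)
    then have "cglp_regular_bfs n ?q ?At ?bt r T D d0 \<alpha>' \<beta>' u' v'"
      by (rule cglp_regular_bfs_if_full_row_rank[OF Atil_unit_rows basic])
    then have "regular_cut n ?q ?At ?bt r T D d0 \<alpha>' \<beta>'"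
      unfolding regular_cut_def by (intro exI[of _ "1::real"] exI[of _ \<alpha>'] exI[of _ \<beta>']) auto
    with x show ?thesis unfolding regular_closure_def by blast
  qed
  show "\<beta> \<le> (\<Sum>j<n. \<alpha> j * x j)"
    by (rule cglp_cut_valid_if_valid_at_basic[OF assms(4) valid_at_basic assms(7) order_refl])
qed

end
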